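(* Let $N\ge 1$, $p>2$, and let $w\in C^1(\mathbb{R}^N)$ be a positive function with $w(x)>C$ for all $x\in\mathbb{R}^N$, for some constant $C>0$. For $R>0$ set $$A_R=\|w\|^{\frac{p+3}{p-1}}_{L^{\frac{p+3}{p-1}}(B_{2R}(0))}=\int_{B_{2R}(0)} w(x)^{\frac{p+3}{p-1}}\,dx .$$ Suppose $A_R=\mathcal{O}(R^\mu)$ (as $R\to\infty$) for some $\mu<\frac{p(p+3)}{p-1}$. Then for every $0<\zeta<1$ there is no stable weak solution $u\in C^{1,\zeta}_{loc}(\mathbb{R}^N)$ of $$-\operatorname{div}\big(w(x)|\nabla u|^{p-2}\nabla u\big)=e^u\quad\text{in }\mathbb{R}^N.$$
   Context: A function $u\in C^{1,\zeta}_{loc}(\mathbb{R}^N)$ is a weak solution of $-\operatorname{div}(w|\nabla u|^{p-2}\nabla u)=f(u)$ in $\mathbb{R}^N$ if $\int_{\mathbb{R}^N} w|\nabla u|^{p-2}\nabla u\cdot\nabla\varphi\,dx-\int_{\mathbb{R}^N} f(u)\varphi\,dx=0$ for all $\varphi\in C^1_c(\mathbb{R}^N)$. Such a weak solution is stable if for all $\varphi\in C^1_c(\mathbb{R}^N)$, $$\int_{\mathbb{R}^N} w|\nabla u|^{p-2}|\nabla\varphi|^2dx+(p-2)\int_{\mathbb{R}^N} w|\nabla u|^{p-4}(\nabla u\cdot\nabla\varphi)^2dx-\int_{\mathbb{R}^N} f'(u)\varphi^2dx\ge 0.$$ Here $f(u)=e^u$, so $f'(u)=e^u$. $B_r(0)$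 denotes the open ball of radius $r$ centered at the origin. *)

theory Defs
  imports "HOL-Analysis.Analysis" "HOL-Library.Landau_Symbols"
begin

definition is_gradient :: "('a::euclidean_space \<Rightarrow> real) \<Rightarrow> ('a \<Rightarrow> 'a) \<Rightarrow> bool" where
  "is_gradient w Dw \<longleftrightarrow> (\<forall>x. (w has_derivative (\<lambda>h. Dw x \<bullet> h)) (at x))"

definition C1_grad :: "('a::euclidean_space \<Rightarrow> real) \<Rightarrow> ('a \<Rightarrow> 'a) \<Rightarrow> bool" where
  "C1_grad w Dw \<longleftrightarrow> is_gradient w Dw \<and> continuous_on UNIV Dw"

definition C1_holder_loc_grad :: "real \<Rightarrow> ('a::euclidean_space \<Rightarrow> real) \<Rightarrow> ('a \<Rightarrow> 'a) \<Rightarrow> bool" where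
  "C1_holder_loc_grad \<zeta> u Du \<longleftrightarrow> C1_grad u Du \<and>
     (\<forall>K. compact K \<longrightarrow> (\<exists>L. \<forall>x\<in>K. \<forall>y\<in>K. norm (Du x - Du y) \<le> L * norm (x - y) powr \<zeta>))"

definition C1c_grad :: "('a::euclidean_space \<Rightarrow> real) \<Rightarrow> ('a \<Rightarrow> 'a) \<Rightarrow> bool" where
  "C1c_grad \<phi> D\<phi> \<longleftrightarrow> C1_grad \<phi> D\<phi> \<and> compact (closure {x. \<phi> x \<noteq> 0})"

text \<open>Weak solution of -div(w |grad u|^{p-2} grad u) = f(u) in R^N (u has gradient Du).\<close>
definition weak_solution ::
  "real \<Rightarrow> ('a::euclidean_space \<Rightarrow> real) \<Rightarrow> (real \<Rightarrow> real) \<Rightarrow> ('a \<Rightarrow> real) \<Rightarrow> ('a \<Rightarrow> 'a) \<Rightarrow> bool" where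
  "weak_solution p w f u Du \<longleftrightarrow>
     (\<forall>\<phi> D\<phi>. C1c_grad \<phi> D\<phi> \<longrightarrow>
        (\<integral>x. w x * norm (Du x) powr (p - 2) * (Du x \<bullet> D\<phi> x) \<partial>lborel)
        - (\<integral>x. f (u x) * \<phi> x \<partial>lborel) = 0)"

text \<open>Stability, with f' the derivative of f. (0 powr a = 0, consistent with the
  convention that the integrands vanish where Du = 0.)\<close>
definition stable ::
  "real \<Rightarrow> ('a::euclidean_space \<Rightarrow> real) \<Rightarrow> (real \<Rightarrow> real) \<Rightarrow> ('a \<Rightarrow> real) \<Rightarrow> ('a \<Rightarrow> 'a) \<Rightarrow> bool" where
  "stable p w f' u Du \<longleftrightarrow>
     (\<forall>\<phi> D\<phi>. C1c_grad \<phi> D\<phi> \<longrightarrow>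
        (\<integral>x. w x * norm (Du x) powr (p - 2) * (norm (D\<phi> x))\<^sup>2 \<partial>lborel)
        + (p - 2) * (\<integral>x. w x * norm (Du x) powr (p - 4) * (Du x \<bullet> D\<phi> x)\<^sup>2 \<partial>lborel)
        - (\<integral>x. f' (u x) * (\<phi> x)\<^sup>2 \<partial>lborel) \<ge> 0)"

end

(* Fix \<alpha> with 1 < (p - 1) \<alpha> < 2 and the cutoff \<psi> = \<eta>_R^m,
   \<eta>_R(x) = max 0 (1 - |x|^2 / (4 R^2)). Testing the equation with e^(2\<alpha>u) \<psi>^2 and the stability
   inequality with e^(\<alpha>u) \<psi>, and absorbing the gradient terms by Young's inequality, gives
     \<integral> e^((2\<alpha>+1)u) \<psi>^2  \<le>  M R^(-p(2\<alpha>+1)) \<integral>_(B_2R) w^(2\<alpha>+1).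
   Since w > C and 2\<alpha> + 1 \<le> (p + 3)/(p - 1), the growth hypothesis makes the right-hand side
   O(R^(\<mu> - p(2\<alpha>+1))), which tends to 0 once \<alpha> is so close to 2/(p - 1) that p(2\<alpha> + 1) > \<mu>.
   The left-hand side, however, is positive and nondecreasing in R. *)

theory Submission
  imports Defs
begin

section \<open>Elementary inequalities\<close>

lemma Youngs_inequality_eps:
  fixes r q \<epsilon> :: real
  assumes r: "r > 1" and q: "q > 1" and rq: "1/r + 1/q = 1" and \<epsilon>: "\<epsilon> > 0"
  obtains K where "K > 0" "\<And>a b. 0 \<le> a \<Longrightarrow> 0 \<le> b \<Longrightarrow> a * b \<le> \<epsilon> * a powr r + K * b powr q"
proof
  define k where "k = (\<epsilon> * r) powr (1/r)"
  have k: "k > 0" "k powr r = \<epsilon> * r"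
    using \<epsilon> r by (simp_all add: k_def powr_powr)
  show "1 / (q * k powr q) > 0" using q k by simp
  fix a b :: real assume a: "0 \<le> a" and b: "0 \<le> b"
  have "a * b = (k * a) * (b / k)" using k by simp
  also have "\<dots> \<le> (k * a) powr r / r + (b / k) powr q / q"
    using a b k by (intro Youngs_inequality[OF r q rq]) auto
  also have "\<dots> = \<epsilon> * a powr r + 1 / (q * k powr q) * b powr q"
    using a b k r by (simp add: powr_mult powr_divide)
  finally show "a * b \<le> \<epsilon> * a powr r + 1 / (q * k powr q) * b powr q" .
qed

lemma powr_diff_mult_power:
  fixes x a :: real
  assumes "0 \<le> x"
  shows "x powr (a - real n) * x ^ n = x powr a"
  using assms by (cases "x = 0") (simp_all add: powr_realpow[symmetric] powr_add[symmetric])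

lemma powr_mult_square_le:
  fixes g c d :: real
  assumes g: "0 \<le> g" and c: "\<bar>c\<bar> \<le> g * d"
  shows "g powr (a - 2) * c\<^sup>2 \<le> g powr a * d\<^sup>2"
proof -
  have "c\<^sup>2 \<le> g\<^sup>2 * d\<^sup>2"
    using c by (metis abs_ge_zero power2_abs power_mono power_mult_distrib)
  then have "g powr (a - 2) * c\<^sup>2 \<le> g powr (a - 2) * g\<^sup>2 * d\<^sup>2"
    by (simp add: mult_left_mono mult.assoc)
  also have "g powr (a - 2) * g\<^sup>2 = g powr a"
    using powr_diff_mult_power[OF g, of a 2] by simp
  finally show ?thesis .
qed

lemma powr_cutoff_gradient_bound:
  fixes y R p :: real
  assumes y: "0 < y" and R: "0 < R" and m: "1 \<le> m"
  shows "(real m * y ^ (m - 1) / R) powr p * y powr (- (real m * (p - 2)))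
    = real m powr p * (R powr (- p) * y powr (2 * real m - p))"
proof -
  have "y ^ (m - 1) = y powr (real m - 1)" using y m by (simp add: powr_realpow[symmetric] of_nat_diff)
  then have "(real m * y ^ (m - 1) / R) powr p = real m powr p * R powr (- p) * y powr ((real m - 1) * p)"
    using y R by (simp add: powr_mult powr_divide powr_powr powr_minus_divide)
  moreover have "y powr ((real m - 1) * p) * y powr (- (real m * (p - 2))) = y powr (2 * real m - p)"
    by (simp add: powr_add[symmetric] algebra_simps)
  ultimately show ?thesis by (simp add: mult_ac)
qed

lemma Youngs_inequality_cutoff:
  fixes p k \<epsilon> :: real and m :: nat
  assumes k: "0 < k" "k < p" and \<epsilon>: "\<epsilon> > 0" and m: "m \<ge> 1"
  obtains K where "K > 0"
    "\<And>g y d R. 0 \<le> g \<Longrightarrow> 0 < y \<Longrightarrow> 0 < R \<Longrightarrow> 0 \<le> d \<Longrightarrow> d \<le> real m * y ^ (m - 1) / R \<Longrightarrow>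
       g powr (p - k) * d powr k * y powr (real m * (2 - k))
         \<le> \<epsilon> * (g powr p * y ^ (2 * m)) + K * (R powr (- p) * y powr (2 * real m - p))"
proof -
  have r: "p / (p - k) > 1" and q: "p / k > 1" and rq: "1 / (p / (p - k)) + 1 / (p / k) = 1"
    using k by (auto simp: field_simps)
  obtain K0 where K0: "K0 > 0" and young:
      "\<And>a b. 0 \<le> a \<Longrightarrow> 0 \<le> b \<Longrightarrow> a * b \<le> \<epsilon> * a powr (p / (p - k)) + K0 * b powr (p / k)"
    using Youngs_inequality_eps[OF r q rq \<epsilon>] by blast
  show thesis
  proof
    show "K0 * real m powr p > 0" using K0 m by simp
    fix g y d R :: real
    assume g: "0 \<le> g" and y: "0 < y" and R: "0 < R" and d: "0 \<le> d"
      and d_le: "d \<le> real m * y ^ (m - 1) / R"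
    \<comment> \<open>The power of \<open>y\<close> is split so that \<open>X\<^sup>p\<close> and \<open>Z\<^sup>p\<close> carry exactly the weights \<open>y\<^sup>2\<^sup>m\<close> and \<open>y\<^sup>2\<^sup>m\<^sup>-\<^sup>p\<close>.\<close>
    define X where "X = g * y powr (2 * real m / p)"
    define Z where "Z = d * y powr (- (real m * (p - 2) / p))"
    have XZ: "0 \<le> X" "0 \<le> Z" using g d by (simp_all add: X_def Z_def)
    have "g powr (p - k) * d powr k * y powr (real m * (2 - k)) = X powr (p - k) * Z powr k"
    proof -
      have "real m * (2 - k) = 2 * real m / p * (p - k) + - (real m * (p - 2) / p) * k"
        using k by (simp add: field_simps)
      then have "y powr (real m * (2 - k))
          = (y powr (2 * real m / p)) powr (p - k) * (y powr (- (real m * (p - 2) / p))) powr k"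
        by (simp only: powr_powr powr_add)
      then show ?thesis
        using g d y by (simp add: X_def Z_def powr_mult mult_ac)
    qed
    also have "\<dots> \<le> \<epsilon> * (X powr (p - k)) powr (p / (p - k)) + K0 * (Z powr k) powr (p / k)"
      using XZ by (intro young) auto
    also have "(X powr (p - k)) powr (p / (p - k)) = g powr p * y ^ (2 * m)"
      using k g y by (simp add: X_def powr_powr powr_mult powr_realpow[symmetric])
    also have "(Z powr k) powr (p / k) = d powr p * y powr (- (real m * (p - 2)))"
      using k d y by (simp add: Z_def powr_powr powr_mult)
    also have "\<dots> \<le> (real m * y ^ (m - 1) / R) powr p * y powr (- (real m * (p - 2)))"
      using d d_le k by (intro mult_right_mono powr_mono2) auto
    also have "\<dots> = real m powr p * (R powr (- p) * y powr (2 * real m - p))"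
      using y R m by (rule powr_cutoff_gradient_bound)
    finally show "g powr (p - k) * d powr k * y powr (real m * (2 - k))
        \<le> \<epsilon> * (g powr p * y ^ (2 * m)) + K0 * real m powr p * (R powr (- p) * y powr (2 * real m - p))"
      using K0 by (simp add: mult_left_mono mult.assoc)
  qed
qed

lemma Youngs_inequality_cutoff_square:
  fixes p \<epsilon> :: real and m :: nat
  assumes p: "2 < p" and \<epsilon>: "\<epsilon> > 0" and m: "m \<ge> 2"
  obtains K where "K > 0"
    "\<And>g y d R. 0 \<le> g \<Longrightarrow> 0 \<le> y \<Longrightarrow> 0 < R \<Longrightarrow> 0 \<le> d \<Longrightarrow> d \<le> real m * y ^ (m - 1) / R \<Longrightarrow>
       g powr (p - 2) * d\<^sup>2 \<le> \<epsilon> * (g powr p * y ^ (2 * m)) + K * (R powr (- p) * y powr (2 * real m - p))"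
proof -
  obtain K where K: "K > 0" and young: "\<And>g y d R. 0 \<le> g \<Longrightarrow> 0 < y \<Longrightarrow> 0 < R \<Longrightarrow> 0 \<le> d \<Longrightarrow>
      d \<le> real m * y ^ (m - 1) / R \<Longrightarrow> g powr (p - 2) * d powr 2 * y powr (real m * (2 - 2))
        \<le> \<epsilon> * (g powr p * y ^ (2 * m)) + K * (R powr (- p) * y powr (2 * real m - p))"
    using Youngs_inequality_cutoff[of 2 p \<epsilon> m] p \<epsilon> m by auto
  show thesis
  proof (rule that[OF K])
    fix g y d R :: real
    assume g: "0 \<le> g" and y: "0 \<le> y" and R: "0 < R" and d: "0 \<le> d"
      and d_le: "d \<le> real m * y ^ (m - 1) / R"
    show "g powr (p - 2) * d\<^sup>2 \<le> \<epsilon> * (g powr p * y ^ (2 * m)) + K * (R powr (- p) * y powr (2 * real m - p))"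
    proof (cases "y = 0")
      case True
      then show ?thesis using d d_le m \<epsilon> K by (simp add: power_0_left)
    next
      case False
      then show ?thesis using young[OF g _ R d d_le] y d by (simp add: powr_numeral)
    qed
  qed
qed

lemma Youngs_inequality_cutoff_mixed:
  fixes p \<epsilon> :: real and m :: nat
  assumes p: "2 < p" and \<epsilon>: "\<epsilon> > 0" and m: "m \<ge> 2"
  obtains K where "K > 0"
    "\<And>g y d R. 0 \<le> g \<Longrightarrow> 0 \<le> y \<Longrightarrow> 0 < R \<Longrightarrow> 0 \<le> d \<Longrightarrow> d \<le> real m * y ^ (m - 1) / R \<Longrightarrow>
       g powr (p - 1) * (y ^ m * d) \<le> \<epsilon> * (g powr p * y ^ (2 * m)) + K * (R powr (- p) * y powr (2 * real m - p))"
proof -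
  obtain K where K: "K > 0" and young: "\<And>g y d R. 0 \<le> g \<Longrightarrow> 0 < y \<Longrightarrow> 0 < R \<Longrightarrow> 0 \<le> d \<Longrightarrow>
      d \<le> real m * y ^ (m - 1) / R \<Longrightarrow> g powr (p - 1) * d powr 1 * y powr (real m * (2 - 1))
        \<le> \<epsilon> * (g powr p * y ^ (2 * m)) + K * (R powr (- p) * y powr (2 * real m - p))"
    using Youngs_inequality_cutoff[of 1 p \<epsilon> m] p \<epsilon> m by auto
  show thesis
  proof (rule that[OF K])
    fix g y d R :: real
    assume g: "0 \<le> g" and y: "0 \<le> y" and R: "0 < R" and d: "0 \<le> d"
      and d_le: "d \<le> real m * y ^ (m - 1) / R"
    show "g powr (p - 1) * (y ^ m * d) \<le> \<epsilon> * (g powr p * y ^ (2 * m)) + K * (R powr (- p) * y powr (2 * real m - p))"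
    proof (cases "y = 0")
      case True
      then show ?thesis using m \<epsilon> K by (simp add: power_0_left)
    next
      case False
      then show ?thesis using young[OF g _ R d d_le] y d by (simp add: powr_realpow mult_ac)
    qed
  qed
qed

lemma Youngs_inequality_exp_cutoff:
  fixes p \<alpha> \<theta> :: real and m :: nat
  assumes \<alpha>: "\<alpha> > 0" and \<theta>: "\<theta> > 0" and m: "p * (2 * \<alpha> + 1) \<le> 2 * real m"
  obtains K where "K > 0"
    "\<And>\<omega> v y R. 0 \<le> \<omega> \<Longrightarrow> 0 < y \<Longrightarrow> y \<le> 1 \<Longrightarrow> 0 < R \<Longrightarrow>
       \<omega> * exp (2 * \<alpha> * v) * (R powr (- p) * y powr (2 * real m - p))
         \<le> \<theta> * (exp ((2 * \<alpha> + 1) * v) * y ^ (2 * m)) + K * (R powr (- p * (2 * \<alpha> + 1)) * \<omega> powr (2 * \<alpha> + 1))"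
proof -
  define s where "s = 2 * \<alpha> + 1"
  have r: "s / (s - 1) > 1" and q: "s > 1" and rq: "1 / (s / (s - 1)) + 1 / s = 1"
    using \<alpha> by (auto simp: s_def field_simps)
  obtain K where K: "K > 0" and young:
      "\<And>a b. 0 \<le> a \<Longrightarrow> 0 \<le> b \<Longrightarrow> a * b \<le> \<theta> * a powr (s / (s - 1)) + K * b powr s"
    using Youngs_inequality_eps[OF r q rq \<theta>] by blast
  show thesis
  proof
    show "K > 0" by (fact K)
    fix \<omega> v y R :: real
    assume \<omega>: "0 \<le> \<omega>" and y: "0 < y" "y \<le> 1" and R: "0 < R"
    define t where "t = 2 * real m * (s - 1) / s"
    define X where "X = exp (2 * \<alpha> * v) * y powr t"
    define Z where "Z = \<omega> * R powr (- p) * y powr (2 * real m - p - t)"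
    have "\<omega> * exp (2 * \<alpha> * v) * (R powr (- p) * y powr (2 * real m - p)) = X * Z"
      using y by (simp add: X_def Z_def powr_add[symmetric] mult_ac)
    also have "\<dots> \<le> \<theta> * X powr (s / (s - 1)) + K * Z powr s"
      using \<omega> by (intro young) (auto simp: X_def Z_def)
    also have "X powr (s / (s - 1)) = exp ((2 * \<alpha> + 1) * v) * y ^ (2 * m)"
    proof -
      have "exp (2 * \<alpha> * v) powr (s / (s - 1)) = exp ((2 * \<alpha> + 1) * v)"
        using \<alpha> by (simp add: s_def powr_def field_simps)
      moreover have "(y powr t) powr (s / (s - 1)) = y ^ (2 * m)"
        using y q by (simp add: t_def powr_powr powr_realpow[symmetric])
      ultimately show ?thesis by (simp add: X_def powr_mult)
    qed
    also have "Z powr s \<le> R powr (- p * s) * \<omega> powr s"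
    proof -
      have "(2 * real m - p - t) * s = 2 * real m - p * s"
        using q by (simp add: t_def field_simps)
      then have "Z powr s = \<omega> powr s * R powr (- p * s) * y powr (2 * real m - p * s)"
        using \<omega> R y by (simp add: Z_def powr_mult powr_powr)
      moreover have "y powr (2 * real m - p * s) \<le> 1"
        using y m by (intro powr_le1) (auto simp: s_def)
      ultimately show ?thesis
        using \<omega> R by (simp add: mult_left_le mult.commute)
    qed
    finally show "\<omega> * exp (2 * \<alpha> * v) * (R powr (- p) * y powr (2 * real m - p))
        \<le> \<theta> * (exp ((2 * \<alpha> + 1) * v) * y ^ (2 * m)) + K * (R powr (- p * (2 * \<alpha> + 1)) * \<omega> powr (2 * \<alpha> + 1))"
      using K by (simp add: s_def mult_left_mono)
  qed
qed

lemma absorption_inequality: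
  fixes p \<alpha> \<epsilon> K1 K2 I J K E T :: real
  defines "\<beta> \<equiv> (p - 1) * \<alpha> - 1" and "\<gamma> \<equiv> \<alpha> * (2 - (p - 1) * \<alpha>)"
  assumes \<alpha>: "0 < \<alpha>" "1 < (p - 1) * \<alpha>" "(p - 1) * \<alpha> < 2"
    and \<epsilon>: "0 < \<epsilon>" "(2 * \<beta> + p - 1) * \<epsilon> \<le> \<gamma> / 2"
    and I: "0 \<le> I"
    and weak: "2 * \<alpha> * I + 2 * J = E"
    and stable: "E \<le> (p - 1) * (\<alpha>\<^sup>2 * I + 2 * \<alpha> * J + K)"
    and K: "K \<le> \<epsilon> * I + K1 * T" and J: "J \<le> \<epsilon> * I + K2 * T"
  shows "E \<le> ((2 * \<alpha> + 2 * \<epsilon>) * (2 * (2 * \<beta> * K2 + (p - 1) * K1) / \<gamma>) + 2 * K2) * T"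
proof -
  have p: "1 < p"
    using \<alpha> zero_less_mult_pos2[of "p - 1" \<alpha>] by linarith
  have \<gamma>: "0 < \<gamma>" using \<alpha> by (simp add: \<gamma>_def)
  have E_le: "E \<le> (2 * \<alpha> + 2 * \<epsilon>) * I + 2 * K2 * T"
    using weak J by (simp add: algebra_simps)
  have J_eq: "J = (E - 2 * \<alpha> * I) / 2"
    using weak by simp
  have "E \<le> (p - 1) * (\<alpha>\<^sup>2 * I + 2 * \<alpha> * ((E - 2 * \<alpha> * I) / 2) + K)"
    using stable unfolding J_eq .
  then have "(p - 1) * \<alpha>\<^sup>2 * I \<le> \<beta> * E + (p - 1) * K"
    by (simp add: \<beta>_def field_simps power2_eq_square)
  also have "\<dots> \<le> \<beta> * ((2 * \<alpha> + 2 * \<epsilon>) * I + 2 * K2 * T) + (p - 1) * (\<epsilon> * I + K1 * T)"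
    using E_le K \<alpha> p by (intro add_mono mult_left_mono) (auto simp: \<beta>_def)
  finally have "(\<gamma> - (2 * \<beta> + p - 1) * \<epsilon>) * I \<le> (2 * \<beta> * K2 + (p - 1) * K1) * T"
    by (simp add: \<beta>_def \<gamma>_def algebra_simps power2_eq_square)
  moreover have "\<gamma> / 2 * I \<le> (\<gamma> - (2 * \<beta> + p - 1) * \<epsilon>) * I"
    using \<epsilon> I by (intro mult_right_mono) auto
  ultimately have "I \<le> 2 * (2 * \<beta> * K2 + (p - 1) * K1) / \<gamma> * T"
    using \<gamma> by (simp add: field_simps)
  then have "(2 * \<alpha> + 2 * \<epsilon>) * I \<le> (2 * \<alpha> + 2 * \<epsilon>) * (2 * (2 * \<beta> * K2 + (p - 1) * K1) / \<gamma> * T)"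
    using \<alpha> \<epsilon> by (intro mult_left_mono) auto
  then show ?thesis
    using E_le by (simp add: algebra_simps)
qed

lemma exponent_below_critical:
  fixes p \<mu> :: real
  assumes p: "1 < p" and \<mu>: "\<mu> < p * (p + 3) / (p - 1)"
  obtains \<alpha> where "1 < (p - 1) * \<alpha>" "(p - 1) * \<alpha> < 2"
    "\<mu> < p * (2 * \<alpha> + 1)" "2 * \<alpha> + 1 \<le> (p + 3) / (p - 1)"
proof
  define \<tau> where "\<tau> = min (1 / (2 * (p - 1))) ((p * (p + 3) / (p - 1) - \<mu>) / (4 * p))"
  have \<tau>0: "0 < \<tau>"
    using p \<mu> by (simp add: \<tau>_def)
  have "(p - 1) * \<tau> \<le> (p - 1) * (1 / (2 * (p - 1)))"
    using p by (intro mult_left_mono) (auto simp: \<tau>_def)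
  also have "\<dots> = 1 / 2"
    using p by simp
  finally have \<tau>1: "(p - 1) * \<tau> \<le> 1 / 2" .
  have "4 * p * \<tau> \<le> 4 * p * ((p * (p + 3) / (p - 1) - \<mu>) / (4 * p))"
    using p by (intro mult_left_mono) (auto simp: \<tau>_def)
  then have \<tau>2: "4 * p * \<tau> \<le> p * (p + 3) / (p - 1) - \<mu>"
    using p by simp
  note \<tau> = \<tau>0 \<tau>1 \<tau>2
  define \<alpha> where "\<alpha> = 2 / (p - 1) - \<tau>"
  have \<alpha>: "(p - 1) * \<alpha> = 2 - (p - 1) * \<tau>" "2 * \<alpha> + 1 = (p + 3) / (p - 1) - 2 * \<tau>"
    using p by (simp_all add: \<alpha>_def field_simps)
  show "1 < (p - 1) * \<alpha>" "(p - 1) * \<alpha> < 2"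
    using \<alpha>(1) \<tau> p by auto
  show "2 * \<alpha> + 1 \<le> (p + 3) / (p - 1)"
    using \<alpha>(2) \<tau> by simp
  have "p * (2 * \<alpha> + 1) = p * (p + 3) / (p - 1) - 2 * (p * \<tau>)"
    unfolding \<alpha>(2) by (simp add: right_diff_distrib)
  moreover have "0 < p * \<tau>" using p \<tau> by simp
  ultimately show "\<mu> < p * (2 * \<alpha> + 1)"
    using \<tau> by linarith
qed

lemma eventually_le_powr_imp_nonpos:
  fixes c M a :: real
  assumes "eventually (\<lambda>R. c \<le> M * R powr a) at_top" "a < 0"
  shows "c \<le> 0"
proof -
  have "((\<lambda>R. M * R powr a) \<longlongrightarrow> M * 0) at_top"
    using assms(2) by (intro tendsto_mult tendsto_const tendsto_neg_powr filterlim_ident)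
  then show ?thesis
    using assms(1) by (intro tendsto_lowerbound) auto
qed

section \<open>Test functions\<close>

lemma is_gradient_imp_continuous_on:
  assumes "is_gradient f Df" shows "continuous_on UNIV f"
  using assms unfolding is_gradient_def
  by (meson continuous_at_imp_continuous_on has_derivative_continuous)

lemma is_gradient_mult:
  assumes "is_gradient f Df" "is_gradient g Dg"
  shows "is_gradient (\<lambda>x. f x * g x) (\<lambda>x. f x *\<^sub>R Dg x + g x *\<^sub>R Df x)"
  unfolding is_gradient_def
proof
  fix x
  have f: "(f has_derivative (\<lambda>h. Df x \<bullet> h)) (at x)" and g: "(g has_derivative (\<lambda>h. Dg x \<bullet> h)) (at x)"
    using assms unfolding is_gradient_def by auto
  show "((\<lambda>x. f x * g x) has_derivative (\<lambda>h. (f x *\<^sub>R Dg x + g x *\<^sub>R Df x) \<bullet> h)) (at x)"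
    by (rule has_derivative_eq_rhs[OF has_derivative_mult[OF f g]])
       (auto simp: inner_add_left algebra_simps)
qed

lemma is_gradient_exp:
  assumes "is_gradient f Df"
  shows "is_gradient (\<lambda>x. exp (c * f x)) (\<lambda>x. (c * exp (c * f x)) *\<^sub>R Df x)"
  unfolding is_gradient_def
proof
  fix x
  have "((\<lambda>x. c * f x) has_derivative (\<lambda>h. c * (Df x \<bullet> h))) (at x)"
    using assms unfolding is_gradient_def by (auto intro: derivative_intros)
  then show "((\<lambda>x. exp (c * f x)) has_derivative (\<lambda>h. ((c * exp (c * f x)) *\<^sub>R Df x) \<bullet> h)) (at x)"
    by (rule has_derivative_eq_rhs[OF DERIV_compose_FDERIV[OF DERIV_exp]]) (auto simp: algebra_simps)
qed

lemma has_real_derivative_max0_power: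
  fixes m :: nat assumes m: "m \<ge> 2"
  shows "((\<lambda>t::real. (max 0 t) ^ m) has_real_derivative (real m * (max 0 t) ^ (m - 1))) (at t)"
proof -
  consider "t > 0" | "t < 0" | "t = 0" by linarith
  then show ?thesis
  proof cases
    case 1
    have "((\<lambda>t::real. t ^ m) has_real_derivative (real m * t ^ (m - 1))) (at t)"
      using DERIV_pow[of m t] by simp
    then have "((\<lambda>t::real. (max 0 t) ^ m) has_real_derivative (real m * t ^ (m - 1))) (at t)"
      by (rule has_field_derivative_transform_within_open[where S="{0<..}"]) (use 1 in auto)
    then show ?thesis using 1 by simp
  next
    case 2
    have "((\<lambda>t::real. (max 0 t) ^ m) has_real_derivative 0) (at t)"
      by (rule has_field_derivative_transform_within_open[where S="{..<0}", OF DERIV_const])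
         (use 2 m in auto)
    then show ?thesis using 2 m by (simp add: power_0_left)
  next
    case 3
    have "((\<lambda>y. ((max 0 y) ^ m - (max 0 0) ^ m) / (y - 0)) \<longlongrightarrow> (0::real)) (at 0)"
    proof (rule Lim_null_comparison)
      show "\<forall>\<^sub>F y in at 0. norm (((max 0 y) ^ m - (max 0 0) ^ m) / (y - 0)) \<le> \<bar>y\<bar> ^ (m - 1)"
      proof (intro always_eventually allI)
        fix y :: real
        have "\<bar>max 0 y\<bar> ^ m \<le> \<bar>y\<bar> ^ m" by (intro power_mono) auto
        moreover have "\<bar>y\<bar> ^ m = \<bar>y\<bar> * \<bar>y\<bar> ^ (m - 1)"
          using m by (simp add: power_eq_if)
        ultimately show "norm (((max 0 y) ^ m - (max 0 0) ^ m) / (y - 0)) \<le> \<bar>y\<bar> ^ (m - 1)"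
          using m by (cases "y = 0") (auto simp: power_abs divide_le_eq abs_mult mult.commute power_0_left)
      qed
      have "((\<lambda>y::real. \<bar>y\<bar> ^ (m - 1)) \<longlongrightarrow> \<bar>0\<bar> ^ (m - 1)) (at 0)"
        by (intro tendsto_intros)
      moreover have "\<bar>0::real\<bar> ^ (m - 1) = 0" using m by simp
      ultimately show "((\<lambda>y::real. \<bar>y\<bar> ^ (m - 1)) \<longlongrightarrow> 0) (at 0)"
        by metis
    qed
    then show ?thesis
      using 3 m by (simp add: has_field_derivative_iff power_0_left)
  qed
qed

lemma integrable_continuous_vanishing:
  fixes f :: "'a::euclidean_space \<Rightarrow> real"
  assumes "continuous_on UNIV f" "compact S" "\<And>x. x \<notin> S \<Longrightarrow> f x = 0"
  shows "integrable lborel f"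
proof -
  have "(\<lambda>x. indicator S x *\<^sub>R f x) = f"
    using assms(3) by (auto simp: fun_eq_iff indicator_def)
  moreover have "integrable lborel (\<lambda>x. indicator S x *\<^sub>R f x)"
    using assms(1,2) by (intro borel_integrable_compact) (auto intro: continuous_on_subset)
  ultimately show ?thesis by simp
qed

lemma C1c_grad_if_vanishing_outside:
  assumes "is_gradient \<phi> D\<phi>" "continuous_on UNIV D\<phi>" "compact S" "\<And>x. x \<notin> S \<Longrightarrow> \<phi> x = 0"
  shows "C1c_grad \<phi> D\<phi>"
proof -
  have "{x. \<phi> x \<noteq> 0} \<subseteq> S" using assms(4) by blast
  then have "bounded {x. \<phi> x \<noteq> 0}" using assms(3) compact_imp_bounded bounded_subset by blast
  then show ?thesis using assms(1,2) by (simp add: C1c_grad_def C1_grad_def)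
qed

lemma set_integrable_continuous_ball:
  fixes f :: "'a::euclidean_space \<Rightarrow> real"
  assumes "continuous_on UNIV f"
  shows "set_integrable lborel (ball 0 r) f"
proof -
  have "set_integrable lborel (cball 0 r) f"
    unfolding set_integrable_def using assms
    by (intro borel_integrable_compact) (auto intro: continuous_on_subset)
  then show ?thesis by (rule set_integrable_subset) auto
qed

lemma set_integral_powr_le_of_lower_bound:
  fixes w :: "'a::euclidean_space \<Rightarrow> real"
  assumes w: "continuous_on UNIV w" "\<And>x. C < w x" and C: "0 < C" and s: "0 < s" "s \<le> q"
  shows "(LINT x : ball 0 r | lborel. w x powr s) \<le> C powr (s - q) * (LINT x : ball 0 r | lborel. w x powr q)"
proof -
  have w0: "0 < w x" for x using w(2)[of x] C by linarith
  have "w x powr s \<le> C powr (s - q) * w x powr q" for x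
  proof -
    have "w x powr (s - q) \<le> C powr (s - q)"
      using s C w(2)[of x] by (intro powr_mono2') auto
    then have "w x powr (s - q) * w x powr q \<le> C powr (s - q) * w x powr q"
      by (intro mult_right_mono) auto
    then show ?thesis by (simp add: powr_add[symmetric])
  qed
  moreover have "set_integrable lborel (ball 0 r) (\<lambda>x. w x powr a)" if "0 < a" for a
    using w0 that by (intro set_integrable_continuous_ball continuous_on_powr' w(1)) (auto simp: less_imp_le)
  ultimately have "(LINT x : ball 0 r | lborel. w x powr s) \<le> (LINT x : ball 0 r | lborel. C powr (s - q) * w x powr q)"
    using s by (intro set_integral_mono set_integrable_mult_right) auto
  then show ?thesis by simp
qed

lemma integral_pos_if_continuous:
  fixes f :: "'a::euclidean_space \<Rightarrow> real"
  assumes f: "continuous_on UNIV f" "\<And>x. 0 \<le> f x" "0 < f a" "integrable lborel f"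
  shows "0 < integral\<^sup>L lborel f"
proof -
  obtain d where d: "0 < d" and near: "\<And>x. dist x a < d \<Longrightarrow> dist (f x) (f a) < f a / 2"
    using f(1,3) unfolding continuous_on_iff by (metis UNIV_I half_gt_zero)
  have "f a / 2 < f x" if "x \<in> ball a d" for x
    using near[of x] that by (auto simp: dist_commute dist_real_def abs_if split: if_splits)
  then have "indicator (ball a d) x * (f a / 2) \<le> f x" for x
    using f(2)[of x] by (auto simp: indicator_def less_imp_le)
  moreover have "integrable lborel (\<lambda>x. indicator (ball a d) x * (f a / 2))"
    using emeasure_bounded_finite[of "ball a d"] by (intro integrable_mult_left integrable_real_indicator) auto
  ultimately have "(\<integral>x. indicator (ball a d) x * (f a / 2) \<partial>lborel) \<le> integral\<^sup>L lborel f"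
    using f(4) by (intro integral_mono)
  moreover have "0 < (\<integral>x. indicator (ball a d) x * (f a / 2) \<partial>lborel)"
    using d f(3) content_ball_pos[OF d, of a] by simp
  ultimately show ?thesis by linarith
qed

definition cutoff :: "real \<Rightarrow> 'a::euclidean_space \<Rightarrow> real" where
  "cutoff R x = max 0 (1 - (x \<bullet> x) / (4 * R\<^sup>2))"

definition cutoff_power_grad :: "real \<Rightarrow> nat \<Rightarrow> 'a::euclidean_space \<Rightarrow> 'a" where
  "cutoff_power_grad R m x = (- (real m * cutoff R x ^ (m - 1) / (2 * R\<^sup>2))) *\<^sub>R x"

lemma cutoff_nonneg: "0 \<le> cutoff R x"
  by (simp add: cutoff_def)

lemma cutoff_le_one: "cutoff R x \<le> 1"
  by (simp add: cutoff_def)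

lemma cutoff_pos_iff:
  assumes "R > 0" shows "0 < cutoff R x \<longleftrightarrow> norm x < 2 * R"
proof -
  have "x \<bullet> x / (4 * R\<^sup>2) < 1 \<longleftrightarrow> x \<bullet> x < (2 * R)\<^sup>2"
    using assms by (simp add: divide_less_eq power_mult_distrib)
  then show ?thesis
    using assms by (auto simp: cutoff_def norm_lt_square less_max_iff_disj)
qed

lemma cutoff_eq_0:
  assumes "R > 0" "2 * R \<le> norm x" shows "cutoff R x = 0"
  using cutoff_pos_iff[OF assms(1), of x] assms(2) cutoff_nonneg[of R x] by linarith

lemma cutoff_mono:
  assumes "0 < R" "R \<le> R'" shows "cutoff R x \<le> cutoff R' x"
proof -
  have "(x \<bullet> x) / (4 * R'\<^sup>2) \<le> (x \<bullet> x) / (4 * R\<^sup>2)"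
    using assms by (intro divide_left_mono mult_left_mono power_mono) auto
  then show ?thesis by (simp add: cutoff_def)
qed

lemma continuous_on_cutoff: "continuous_on UNIV (cutoff R)"
  unfolding cutoff_def divide_inverse by (intro continuous_intros)

lemma is_gradient_cutoff_power:
  assumes R: "R > 0" and m: "m \<ge> 2"
  shows "is_gradient (\<lambda>x. cutoff R x ^ m) (cutoff_power_grad R m)"
  unfolding is_gradient_def
proof
  fix x :: 'a
  have "((\<lambda>x. 1 - (x \<bullet> x) / (4 * R\<^sup>2)) has_derivative (\<lambda>h. - ((x \<bullet> h + h \<bullet> x) / (4 * R\<^sup>2)))) (at x)"
    by (intro derivative_eq_intros) (use R in auto)
  from DERIV_compose_FDERIV[OF has_real_derivative_max0_power[OF m] this]
  show "((\<lambda>x. cutoff R x ^ m) has_derivative (\<lambda>h. cutoff_power_grad R m x \<bullet> h)) (at x)"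
    unfolding cutoff_def
    by (rule has_derivative_eq_rhs)
       (use R in \<open>auto simp: cutoff_power_grad_def cutoff_def inner_commute field_simps power2_eq_square\<close>)
qed

lemma continuous_on_cutoff_power_grad: "continuous_on UNIV (cutoff_power_grad R m)"
  unfolding cutoff_power_grad_def divide_inverse by (intro continuous_intros continuous_on_cutoff)

lemma cutoff_power_grad_eq_0:
  "R > 0 \<Longrightarrow> m \<ge> 2 \<Longrightarrow> 2 * R \<le> norm x \<Longrightarrow> cutoff_power_grad R m x = 0"
  by (simp add: cutoff_power_grad_def cutoff_eq_0)

lemma cutoff_vanishing:
  assumes "0 < R" "x \<notin> cball 0 (2 * R)"
  shows "cutoff R x = 0" "2 \<le> m \<Longrightarrow> cutoff_power_grad R m x = 0"
  using assms by (auto simp: cutoff_eq_0 cutoff_power_grad_eq_0)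

lemma norm_cutoff_power_grad_le:
  assumes R: "R > 0" and m: "m \<ge> 2"
  shows "norm (cutoff_power_grad R m x) \<le> real m * cutoff R x ^ (m - 1) / R"
proof (cases "norm x < 2 * R")
  case True
  have "norm (cutoff_power_grad R m x) = real m * cutoff R x ^ (m - 1) / (2 * R\<^sup>2) * norm x"
    by (simp add: cutoff_power_grad_def cutoff_nonneg)
  also have "\<dots> \<le> real m * cutoff R x ^ (m - 1) / (2 * R\<^sup>2) * (2 * R)"
    using True by (intro mult_left_mono) (auto simp: cutoff_nonneg)
  also have "\<dots> = real m * cutoff R x ^ (m - 1) / R"
    using R by (simp add: power2_eq_square)
  finally show ?thesis .
next
  case False
  then show ?thesis
    using cutoff_power_grad_eq_0[OF R m, of x] R by (simp add: cutoff_nonneg)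
qed

section \<open>Stable solutions of the weighted exponential equation\<close>

locale exp_stable_solution =
  fixes p :: real and w u :: "'a::euclidean_space \<Rightarrow> real" and Du :: "'a \<Rightarrow> 'a"
  assumes p_gt_2: "2 < p"
    and continuous_w: "continuous_on UNIV w"
    and w_pos: "\<And>x. 0 < w x"
    and gradient_u: "is_gradient u Du"
    and continuous_Du: "continuous_on UNIV Du"
    and weak: "weak_solution p w exp u Du"
    and stable: "stable p w exp u Du"
begin

definition weighted_gradient_integral :: "real \<Rightarrow> ('a \<Rightarrow> real) \<Rightarrow> real" where
  "weighted_gradient_integral \<alpha> \<psi> =
     (\<integral>x. w x * norm (Du x) powr p * exp (2 * \<alpha> * u x) * (\<psi> x)\<^sup>2 \<partial>lborel)"

definition mixed_integral :: "real \<Rightarrow> ('a \<Rightarrow> real) \<Rightarrow> ('a \<Rightarrow> 'a) \<Rightarrow> real" where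
  "mixed_integral \<alpha> \<psi> D\<psi> =
     (\<integral>x. w x * norm (Du x) powr (p - 2) * exp (2 * \<alpha> * u x) * \<psi> x * (Du x \<bullet> D\<psi> x) \<partial>lborel)"

definition test_gradient_integral :: "real \<Rightarrow> ('a \<Rightarrow> 'a) \<Rightarrow> real" where
  "test_gradient_integral \<alpha> D\<psi> =
     (\<integral>x. w x * norm (Du x) powr (p - 2) * exp (2 * \<alpha> * u x) * (norm (D\<psi> x))\<^sup>2 \<partial>lborel)"

definition exp_integral :: "real \<Rightarrow> ('a \<Rightarrow> real) \<Rightarrow> real" where
  "exp_integral \<alpha> \<psi> = (\<integral>x. exp ((2 * \<alpha> + 1) * u x) * (\<psi> x)\<^sup>2 \<partial>lborel)"

lemma continuous_on_u: "continuous_on UNIV u"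
  using gradient_u by (rule is_gradient_imp_continuous_on)

lemma continuous_on_norm_Du_powr: "0 < a \<Longrightarrow> continuous_on UNIV (\<lambda>x. norm (Du x) powr a)"
  by (intro continuous_on_powr' continuous_intros continuous_Du) auto

lemma p_pos: "0 < p" "0 < p - 2"
  using p_gt_2 by auto

lemmas continuity = continuous_on_u continuous_w continuous_Du
  continuous_on_norm_Du_powr[OF p_pos(1)] continuous_on_norm_Du_powr[OF p_pos(2)]

lemma weak_solution_identity:
  assumes \<psi>: "is_gradient \<psi> D\<psi>" "continuous_on UNIV D\<psi>"
    and S: "compact S" "\<And>x. x \<notin> S \<Longrightarrow> \<psi> x = 0"
  shows "2 * \<alpha> * weighted_gradient_integral \<alpha> \<psi> + 2 * mixed_integral \<alpha> \<psi> D\<psi> = exp_integral \<alpha> \<psi>"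
proof -
  define \<phi> where "\<phi> x = exp (2 * \<alpha> * u x) * (\<psi> x * \<psi> x)" for x
  define D\<phi> where "D\<phi> x = exp (2 * \<alpha> * u x) *\<^sub>R (\<psi> x *\<^sub>R D\<psi> x + \<psi> x *\<^sub>R D\<psi> x)
      + (\<psi> x * \<psi> x) *\<^sub>R ((2 * \<alpha> * exp (2 * \<alpha> * u x)) *\<^sub>R Du x)" for x
  have "is_gradient \<phi> D\<phi>"
    unfolding \<phi>_def[abs_def] D\<phi>_def[abs_def]
    by (intro is_gradient_mult is_gradient_exp gradient_u \<psi>)
  moreover have c\<psi>: "continuous_on UNIV \<psi>"
    using \<psi>(1) by (rule is_gradient_imp_continuous_on)
  ultimately have "C1c_grad \<phi> D\<phi>"
    using S \<psi>(2) unfolding D\<phi>_def[abs_def]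
    by (intro C1c_grad_if_vanishing_outside[where S=S] continuous_intros continuity) (auto simp: \<phi>_def)
  then have "(\<integral>x. w x * norm (Du x) powr (p - 2) * (Du x \<bullet> D\<phi> x) \<partial>lborel) = (\<integral>x. exp (u x) * \<phi> x \<partial>lborel)"
    using weak unfolding weak_solution_def by auto
  moreover have "w x * norm (Du x) powr (p - 2) * (Du x \<bullet> D\<phi> x)
      = 2 * \<alpha> * (w x * norm (Du x) powr p * exp (2 * \<alpha> * u x) * (\<psi> x)\<^sup>2)
        + 2 * (w x * norm (Du x) powr (p - 2) * exp (2 * \<alpha> * u x) * \<psi> x * (Du x \<bullet> D\<psi> x))" for x
    using powr_diff_mult_power[OF norm_ge_zero, of "Du x" p 2]
    by (simp add: D\<phi>_def inner_add_right dot_square_norm algebra_simps power2_eq_square)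
  moreover have "exp (u x) * \<phi> x = exp ((2 * \<alpha> + 1) * u x) * (\<psi> x)\<^sup>2" for x
    by (simp add: \<phi>_def mult_exp_exp algebra_simps power2_eq_square)
  moreover have "integrable lborel (\<lambda>x. w x * norm (Du x) powr p * exp (2 * \<alpha> * u x) * (\<psi> x)\<^sup>2)"
    and "integrable lborel (\<lambda>x. w x * norm (Du x) powr (p - 2) * exp (2 * \<alpha> * u x) * \<psi> x * (Du x \<bullet> D\<psi> x))"
    using S p_gt_2 c\<psi> \<psi>(2)
    by (auto intro!: integrable_continuous_vanishing[where S=S] continuous_intros continuity)
  ultimately show ?thesis
    by (simp add: weighted_gradient_integral_def mixed_integral_def exp_integral_def)
qed

lemma stability_inequality_simplified:
  assumes "C1c_grad \<phi> D\<phi>"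
    and Q: "integrable lborel (\<lambda>x. w x * norm (Du x) powr (p - 2) * (norm (D\<phi> x))\<^sup>2)"
  shows "(\<integral>x. exp (u x) * (\<phi> x)\<^sup>2 \<partial>lborel)
    \<le> (p - 1) * (\<integral>x. w x * norm (Du x) powr (p - 2) * (norm (D\<phi> x))\<^sup>2 \<partial>lborel)"
proof -
  define Q where "Q x = w x * norm (Du x) powr (p - 2) * (norm (D\<phi> x))\<^sup>2" for x
  have stab: "(\<integral>x. exp (u x) * (\<phi> x)\<^sup>2 \<partial>lborel)
      \<le> integral\<^sup>L lborel Q + (p - 2) * (\<integral>x. w x * norm (Du x) powr (p - 4) * (Du x \<bullet> D\<phi> x)\<^sup>2 \<partial>lborel)"
    using stable assms(1) unfolding stable_def Q_def by force
  have "(\<integral>x. w x * norm (Du x) powr (p - 4) * (Du x \<bullet> D\<phi> x)\<^sup>2 \<partial>lborel) \<le> integral\<^sup>L lborel Q"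
  proof (cases "integrable lborel (\<lambda>x. w x * norm (Du x) powr (p - 4) * (Du x \<bullet> D\<phi> x)\<^sup>2)")
    case True
    have "norm (Du x) powr (p - 2 - 2) * (Du x \<bullet> D\<phi> x)\<^sup>2 \<le> norm (Du x) powr (p - 2) * (norm (D\<phi> x))\<^sup>2" for x
      by (intro powr_mult_square_le) (auto simp: Cauchy_Schwarz_ineq2)
    then have "w x * norm (Du x) powr (p - 4) * (Du x \<bullet> D\<phi> x)\<^sup>2 \<le> Q x" for x
      using w_pos[of x] by (simp add: Q_def mult.assoc mult_left_mono)
    then show ?thesis
      using True Q by (intro integral_mono) (auto simp: Q_def[abs_def])
  next
    case False
    then show ?thesis
      using w_pos by (simp add: not_integrable_integral_eq Q_def less_imp_le)
  qed
  then have "(p - 2) * (\<integral>x. w x * norm (Du x) powr (p - 4) * (Du x \<bullet> D\<phi> x)\<^sup>2 \<partial>lborel)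
      \<le> (p - 2) * integral\<^sup>L lborel Q"
    using p_gt_2 by (intro mult_left_mono) auto
  then have "(\<integral>x. exp (u x) * (\<phi> x)\<^sup>2 \<partial>lborel) \<le> (p - 1) * integral\<^sup>L lborel Q"
    using stab by (simp add: algebra_simps)
  then show ?thesis
    by (simp only: Q_def[abs_def])
qed

lemma stability_inequality:
  assumes \<psi>: "is_gradient \<psi> D\<psi>" "continuous_on UNIV D\<psi>"
    and S: "compact S" "\<And>x. x \<notin> S \<Longrightarrow> \<psi> x = 0" "\<And>x. x \<notin> S \<Longrightarrow> D\<psi> x = 0"
  shows "exp_integral \<alpha> \<psi> \<le> (p - 1) * (\<alpha>\<^sup>2 * weighted_gradient_integral \<alpha> \<psi>
           + 2 * \<alpha> * mixed_integral \<alpha> \<psi> D\<psi> + test_gradient_integral \<alpha> D\<psi>)"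
proof -
  define \<phi> where "\<phi> x = exp (\<alpha> * u x) * \<psi> x" for x
  define D\<phi> where "D\<phi> x = exp (\<alpha> * u x) *\<^sub>R D\<psi> x + \<psi> x *\<^sub>R ((\<alpha> * exp (\<alpha> * u x)) *\<^sub>R Du x)" for x
  have c\<psi>: "continuous_on UNIV \<psi>"
    using \<psi>(1) by (rule is_gradient_imp_continuous_on)
  have "is_gradient \<phi> D\<phi>"
    unfolding \<phi>_def[abs_def] D\<phi>_def[abs_def]
    by (intro is_gradient_mult is_gradient_exp gradient_u \<psi>)
  then have \<phi>: "C1c_grad \<phi> D\<phi>"
    using S \<psi>(2) c\<psi> unfolding D\<phi>_def[abs_def]
    by (intro C1c_grad_if_vanishing_outside[where S=S] continuous_intros continuity) (auto simp: \<phi>_def)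
  have Q_eq: "w x * norm (Du x) powr (p - 2) * (norm (D\<phi> x))\<^sup>2
      = \<alpha>\<^sup>2 * (w x * norm (Du x) powr p * exp (2 * \<alpha> * u x) * (\<psi> x)\<^sup>2)
        + 2 * \<alpha> * (w x * norm (Du x) powr (p - 2) * exp (2 * \<alpha> * u x) * \<psi> x * (Du x \<bullet> D\<psi> x))
        + w x * norm (Du x) powr (p - 2) * exp (2 * \<alpha> * u x) * (norm (D\<psi> x))\<^sup>2" for x
  proof -
    have "(norm (D\<phi> x))\<^sup>2 = D\<phi> x \<bullet> D\<phi> x"
      by (simp add: power2_norm_eq_inner)
    also have "\<dots> = exp (\<alpha> * u x) * exp (\<alpha> * u x) * (D\<psi> x \<bullet> D\<psi> x
        + 2 * \<alpha> * \<psi> x * (Du x \<bullet> D\<psi> x) + \<alpha>\<^sup>2 * (\<psi> x)\<^sup>2 * (Du x \<bullet> Du x))"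
      by (simp add: D\<phi>_def inner_add_left inner_add_right inner_commute algebra_simps power2_eq_square)
    also have "exp (\<alpha> * u x) * exp (\<alpha> * u x) = exp (2 * \<alpha> * u x)"
      by (simp add: mult_exp_exp)
    finally show ?thesis
      using powr_diff_mult_power[OF norm_ge_zero, of "Du x" p 2]
      by (simp add: dot_square_norm algebra_simps power2_eq_square)
  qed
  have "integrable lborel (\<lambda>x. w x * norm (Du x) powr p * exp (2 * \<alpha> * u x) * (\<psi> x)\<^sup>2)"
    "integrable lborel (\<lambda>x. w x * norm (Du x) powr (p - 2) * exp (2 * \<alpha> * u x) * \<psi> x * (Du x \<bullet> D\<psi> x))"
    "integrable lborel (\<lambda>x. w x * norm (Du x) powr (p - 2) * exp (2 * \<alpha> * u x) * (norm (D\<psi> x))\<^sup>2)"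
    using S p_gt_2 c\<psi> \<psi>(2)
    by (auto intro!: integrable_continuous_vanishing[where S=S] continuous_intros continuity)
  moreover have "exp (u x) * (\<phi> x)\<^sup>2 = exp ((2 * \<alpha> + 1) * u x) * (\<psi> x)\<^sup>2" for x
    by (simp add: \<phi>_def mult_exp_exp algebra_simps power2_eq_square)
  ultimately show ?thesis
    using stability_inequality_simplified[OF \<phi>]
    by (simp add: Q_eq weighted_gradient_integral_def mixed_integral_def test_gradient_integral_def
        exp_integral_def)
qed

definition cutoff_weight_integral :: "real \<Rightarrow> nat \<Rightarrow> real \<Rightarrow> real" where
  "cutoff_weight_integral \<alpha> m R =
     (\<integral>x. w x * exp (2 * \<alpha> * u x) * (R powr (- p) * cutoff R x powr (2 * real m - p)) \<partial>lborel)"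

lemma integrable_cutoff_integrands:
  assumes R: "0 < R" and m: "p < 2 * real m"
  shows "integrable lborel (\<lambda>x. w x * norm (Du x) powr p * exp (2 * \<alpha> * u x) * (cutoff R x ^ m)\<^sup>2)"
    "integrable lborel (\<lambda>x. w x * norm (Du x) powr (p - 2) * exp (2 * \<alpha> * u x) * cutoff R x ^ m
       * (Du x \<bullet> cutoff_power_grad R m x))"
    "integrable lborel (\<lambda>x. w x * norm (Du x) powr (p - 2) * exp (2 * \<alpha> * u x)
       * (norm (cutoff_power_grad R m x))\<^sup>2)"
    "integrable lborel (\<lambda>x. w x * exp (2 * \<alpha> * u x) * (R powr (- p) * cutoff R x powr (2 * real m - p)))"
proof -
  have m2: "2 \<le> m" using m p_gt_2 by linarith
  have "continuous_on UNIV (\<lambda>x. cutoff R x powr (2 * real m - p))"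
    using m by (intro continuous_on_powr' continuous_on_cutoff) (auto simp: cutoff_nonneg)
  note cont = this continuous_on_cutoff continuous_on_cutoff_power_grad continuity
  note vanish = cutoff_vanishing[OF R] cutoff_vanishing(2)[OF R _ m2]
  show "integrable lborel (\<lambda>x. w x * norm (Du x) powr p * exp (2 * \<alpha> * u x) * (cutoff R x ^ m)\<^sup>2)"
    by (rule integrable_continuous_vanishing[where S="cball 0 (2 * R)"])
       (use m2 p_gt_2 in \<open>simp_all add: vanish, intro cont continuous_intros\<close>)
  show "integrable lborel (\<lambda>x. w x * norm (Du x) powr (p - 2) * exp (2 * \<alpha> * u x) * cutoff R x ^ m
       * (Du x \<bullet> cutoff_power_grad R m x))"
    by (rule integrable_continuous_vanishing[where S="cball 0 (2 * R)"])
       (use m2 p_gt_2 in \<open>simp_all add: vanish, intro cont continuous_intros\<close>)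
  show "integrable lborel (\<lambda>x. w x * norm (Du x) powr (p - 2) * exp (2 * \<alpha> * u x)
       * (norm (cutoff_power_grad R m x))\<^sup>2)"
    by (rule integrable_continuous_vanishing[where S="cball 0 (2 * R)"])
       (use m2 p_gt_2 in \<open>simp_all add: vanish, intro cont continuous_intros\<close>)
  show "integrable lborel (\<lambda>x. w x * exp (2 * \<alpha> * u x) * (R powr (- p) * cutoff R x powr (2 * real m - p)))"
    by (rule integrable_continuous_vanishing[where S="cball 0 (2 * R)"])
       (use m2 p_gt_2 in \<open>simp_all add: vanish, intro cont continuous_intros\<close>)
qed

lemma test_gradient_integral_cutoff_le:
  assumes R: "0 < R" and m: "p < 2 * real m"
    and young: "\<And>g y d R. 0 \<le> g \<Longrightarrow> 0 \<le> y \<Longrightarrow> 0 < R \<Longrightarrow> 0 \<le> d \<Longrightarrow> d \<le> real m * y ^ (m - 1) / R \<Longrightarrow>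
       g powr (p - 2) * d\<^sup>2 \<le> \<epsilon> * (g powr p * y ^ (2 * m)) + K * (R powr (- p) * y powr (2 * real m - p))"
  shows "test_gradient_integral \<alpha> (cutoff_power_grad R m)
    \<le> \<epsilon> * weighted_gradient_integral \<alpha> (\<lambda>x. cutoff R x ^ m) + K * cutoff_weight_integral \<alpha> m R"
proof -
  have m2: "2 \<le> m" using m p_gt_2 by linarith
  have "w x * norm (Du x) powr (p - 2) * exp (2 * \<alpha> * u x) * (norm (cutoff_power_grad R m x))\<^sup>2
      \<le> \<epsilon> * (w x * norm (Du x) powr p * exp (2 * \<alpha> * u x) * (cutoff R x ^ m)\<^sup>2)
        + K * (w x * exp (2 * \<alpha> * u x) * (R powr (- p) * cutoff R x powr (2 * real m - p)))" for x
  proof -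
    have "norm (Du x) powr (p - 2) * (norm (cutoff_power_grad R m x))\<^sup>2
        \<le> \<epsilon> * (norm (Du x) powr p * cutoff R x ^ (2 * m)) + K * (R powr (- p) * cutoff R x powr (2 * real m - p))"
      using R norm_cutoff_power_grad_le[OF R m2] by (intro young) (auto simp: cutoff_nonneg)
    then have "w x * exp (2 * \<alpha> * u x) * (norm (Du x) powr (p - 2) * (norm (cutoff_power_grad R m x))\<^sup>2)
        \<le> w x * exp (2 * \<alpha> * u x) * (\<epsilon> * (norm (Du x) powr p * cutoff R x ^ (2 * m))
          + K * (R powr (- p) * cutoff R x powr (2 * real m - p)))"
      using w_pos[of x] by (intro mult_left_mono) auto
    then show ?thesis by (simp add: power_mult[symmetric] mult.commute[of 2] algebra_simps)
  qed
  then have "test_gradient_integral \<alpha> (cutoff_power_grad R m)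
      \<le> (\<integral>x. \<epsilon> * (w x * norm (Du x) powr p * exp (2 * \<alpha> * u x) * (cutoff R x ^ m)\<^sup>2)
        + K * (w x * exp (2 * \<alpha> * u x) * (R powr (- p) * cutoff R x powr (2 * real m - p))) \<partial>lborel)"
    unfolding test_gradient_integral_def
    using integrable_cutoff_integrands[OF R m] by (intro integral_mono) auto
  then show ?thesis
    using integrable_cutoff_integrands[OF R m]
    by (simp add: weighted_gradient_integral_def cutoff_weight_integral_def)
qed

lemma mixed_integral_cutoff_le:
  assumes R: "0 < R" and m: "p < 2 * real m"
    and young: "\<And>g y d R. 0 \<le> g \<Longrightarrow> 0 \<le> y \<Longrightarrow> 0 < R \<Longrightarrow> 0 \<le> d \<Longrightarrow> d \<le> real m * y ^ (m - 1) / R \<Longrightarrow>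
       g powr (p - 1) * (y ^ m * d) \<le> \<epsilon> * (g powr p * y ^ (2 * m)) + K * (R powr (- p) * y powr (2 * real m - p))"
  shows "mixed_integral \<alpha> (\<lambda>x. cutoff R x ^ m) (cutoff_power_grad R m)
    \<le> \<epsilon> * weighted_gradient_integral \<alpha> (\<lambda>x. cutoff R x ^ m) + K * cutoff_weight_integral \<alpha> m R"
proof -
  have m2: "2 \<le> m" using m p_gt_2 by linarith
  have "w x * norm (Du x) powr (p - 2) * exp (2 * \<alpha> * u x) * cutoff R x ^ m * (Du x \<bullet> cutoff_power_grad R m x)
      \<le> \<epsilon> * (w x * norm (Du x) powr p * exp (2 * \<alpha> * u x) * (cutoff R x ^ m)\<^sup>2)
        + K * (w x * exp (2 * \<alpha> * u x) * (R powr (- p) * cutoff R x powr (2 * real m - p)))" for x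
  proof -
    define c where "c = w x * exp (2 * \<alpha> * u x)"
    have c: "0 \<le> c" using w_pos[of x] by (simp add: c_def)
    have "norm (Du x) powr (p - 2) * cutoff R x ^ m * (Du x \<bullet> cutoff_power_grad R m x)
        \<le> norm (Du x) powr (p - 2) * cutoff R x ^ m * (norm (Du x) * norm (cutoff_power_grad R m x))"
      by (intro mult_left_mono norm_cauchy_schwarz) (auto simp: cutoff_nonneg)
    also have "\<dots> = norm (Du x) powr (p - 1) * (cutoff R x ^ m * norm (cutoff_power_grad R m x))"
      using powr_diff_mult_power[OF norm_ge_zero, of "Du x" "p - 1" 1] by (simp add: mult_ac)
    also have "\<dots> \<le> \<epsilon> * (norm (Du x) powr p * cutoff R x ^ (2 * m))
        + K * (R powr (- p) * cutoff R x powr (2 * real m - p))"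
      using R norm_cutoff_power_grad_le[OF R m2] by (intro young) (auto simp: cutoff_nonneg)
    finally have "c * (norm (Du x) powr (p - 2) * cutoff R x ^ m * (Du x \<bullet> cutoff_power_grad R m x))
        \<le> c * (\<epsilon> * (norm (Du x) powr p * cutoff R x ^ (2 * m))
          + K * (R powr (- p) * cutoff R x powr (2 * real m - p)))"
      using c by (intro mult_left_mono)
    then show ?thesis by (simp add: c_def power_mult[symmetric] mult.commute[of 2] algebra_simps)
  qed
  then have "mixed_integral \<alpha> (\<lambda>x. cutoff R x ^ m) (cutoff_power_grad R m)
      \<le> (\<integral>x. \<epsilon> * (w x * norm (Du x) powr p * exp (2 * \<alpha> * u x) * (cutoff R x ^ m)\<^sup>2)
        + K * (w x * exp (2 * \<alpha> * u x) * (R powr (- p) * cutoff R x powr (2 * real m - p))) \<partial>lborel)"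
    unfolding mixed_integral_def
    using integrable_cutoff_integrands[OF R m] by (intro integral_mono) auto
  then show ?thesis
    using integrable_cutoff_integrands[OF R m]
    by (simp add: weighted_gradient_integral_def cutoff_weight_integral_def)
qed

lemma exp_integral_cutoff_le_weight_integral:
  assumes \<alpha>: "1 < (p - 1) * \<alpha>" "(p - 1) * \<alpha> < 2" and m: "p < 2 * real m"
  obtains C where "0 < C"
    "\<And>R. 0 < R \<Longrightarrow> exp_integral \<alpha> (\<lambda>x. cutoff R x ^ m) \<le> C * cutoff_weight_integral \<alpha> m R"
proof -
  have \<alpha>0: "0 < \<alpha>" using \<alpha> p_gt_2 zero_less_mult_pos[of "p - 1" \<alpha>] by linarith
  have m2: "2 \<le> m" using m p_gt_2 by linarith
  define \<beta> where "\<beta> = (p - 1) * \<alpha> - 1"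
  define \<gamma> where "\<gamma> = \<alpha> * (2 - (p - 1) * \<alpha>)"
  define \<epsilon> where "\<epsilon> = \<gamma> / (2 * (2 * \<beta> + p - 1))"
  have \<beta>: "0 < \<beta>" and \<gamma>: "0 < \<gamma>" using \<alpha> \<alpha>0 by (simp_all add: \<beta>_def \<gamma>_def)
  have "0 < 2 * \<beta> + p - 1" using \<beta> p_gt_2 by simp
  then have \<epsilon>: "0 < \<epsilon>" "(2 * \<beta> + p - 1) * \<epsilon> \<le> \<gamma> / 2"
    using \<gamma> by (simp_all add: \<epsilon>_def field_simps)
  obtain K1 where K1: "0 < K1" and young1: "\<And>g y d R. 0 \<le> g \<Longrightarrow> 0 \<le> y \<Longrightarrow> 0 < R \<Longrightarrow> 0 \<le> d \<Longrightarrow>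
      d \<le> real m * y ^ (m - 1) / R \<Longrightarrow>
      g powr (p - 2) * d\<^sup>2 \<le> \<epsilon> * (g powr p * y ^ (2 * m)) + K1 * (R powr (- p) * y powr (2 * real m - p))"
    using Youngs_inequality_cutoff_square[OF p_gt_2 \<epsilon>(1) m2] by blast
  obtain K2 where K2: "0 < K2" and young2: "\<And>g y d R. 0 \<le> g \<Longrightarrow> 0 \<le> y \<Longrightarrow> 0 < R \<Longrightarrow> 0 \<le> d \<Longrightarrow>
      d \<le> real m * y ^ (m - 1) / R \<Longrightarrow>
      g powr (p - 1) * (y ^ m * d) \<le> \<epsilon> * (g powr p * y ^ (2 * m)) + K2 * (R powr (- p) * y powr (2 * real m - p))"
    using Youngs_inequality_cutoff_mixed[OF p_gt_2 \<epsilon>(1) m2] by blast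
  show thesis
  proof (rule that)
    show "0 < (2 * \<alpha> + 2 * \<epsilon>) * (2 * (2 * \<beta> * K2 + (p - 1) * K1) / \<gamma>) + 2 * K2"
      using \<alpha>0 \<beta> \<gamma> \<epsilon> K1 K2 p_gt_2 by (intro add_nonneg_pos mult_nonneg_nonneg divide_nonneg_pos) auto
    fix R :: real assume R: "0 < R"
    have \<psi>: "is_gradient (\<lambda>x. cutoff R x ^ m) (cutoff_power_grad R m)"
      using R m2 by (rule is_gradient_cutoff_power)
    have vanish: "cutoff R x ^ m = 0" "cutoff_power_grad R m x = 0" if "x \<notin> cball 0 (2 * R)" for x
      using cutoff_vanishing[OF R that] m2 by auto
    have "0 \<le> weighted_gradient_integral \<alpha> (\<lambda>x. cutoff R x ^ m)"
      unfolding weighted_gradient_integral_def using w_pos by (intro integral_nonneg_AE AE_I2) (simp add: less_imp_le)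
    then show "exp_integral \<alpha> (\<lambda>x. cutoff R x ^ m)
        \<le> ((2 * \<alpha> + 2 * \<epsilon>) * (2 * (2 * \<beta> * K2 + (p - 1) * K1) / \<gamma>) + 2 * K2) * cutoff_weight_integral \<alpha> m R"
      unfolding \<beta>_def \<gamma>_def
      using \<alpha>0 \<alpha> \<epsilon>[unfolded \<beta>_def \<gamma>_def]
        weak_solution_identity[OF \<psi> continuous_on_cutoff_power_grad compact_cball[of 0 "2 * R"] vanish(1), where \<alpha>=\<alpha>]
        stability_inequality[OF \<psi> continuous_on_cutoff_power_grad compact_cball[of 0 "2 * R"] vanish, where \<alpha>=\<alpha>]
        test_gradient_integral_cutoff_le[OF R m young1, where \<alpha>=\<alpha>]
        mixed_integral_cutoff_le[OF R m young2, where \<alpha>=\<alpha>]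
      by (intro absorption_inequality) auto
  qed
qed

lemma integrable_exp_cutoff:
  assumes "0 < R" "1 \<le> m"
  shows "integrable lborel (\<lambda>x. exp (c * u x) * (cutoff R x ^ m)\<^sup>2)"
  using assms
  by (intro integrable_continuous_vanishing[where S="cball 0 (2 * R)"] continuous_intros
      continuity continuous_on_cutoff) (auto simp: cutoff_vanishing)

lemma cutoff_weight_integral_le:
  assumes R: "0 < R" and \<alpha>: "0 < \<alpha>" and m: "p < 2 * real m" and K: "0 \<le> K"
    and young: "\<And>\<omega> v y R. 0 \<le> \<omega> \<Longrightarrow> 0 < y \<Longrightarrow> y \<le> 1 \<Longrightarrow> 0 < R \<Longrightarrow>
      \<omega> * exp (2 * \<alpha> * v) * (R powr (- p) * y powr (2 * real m - p))
        \<le> \<theta> * (exp ((2 * \<alpha> + 1) * v) * y ^ (2 * m)) + K * (R powr (- p * (2 * \<alpha> + 1)) * \<omega> powr (2 * \<alpha> + 1))"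
  shows "cutoff_weight_integral \<alpha> m R \<le> \<theta> * exp_integral \<alpha> (\<lambda>x. cutoff R x ^ m)
    + K * R powr (- p * (2 * \<alpha> + 1)) * (LINT x : ball 0 (2 * R) | lborel. w x powr (2 * \<alpha> + 1))"
proof -
  have m2: "2 \<le> m" using m p_gt_2 by linarith
  define W where "W x = indicator (ball 0 (2 * R)) x * w x powr (2 * \<alpha> + 1)" for x :: 'a
  have "w x * exp (2 * \<alpha> * u x) * (R powr (- p) * cutoff R x powr (2 * real m - p))
      \<le> \<theta> * (exp ((2 * \<alpha> + 1) * u x) * (cutoff R x ^ m)\<^sup>2) + K * R powr (- p * (2 * \<alpha> + 1)) * W x" for x
  proof (cases "0 < cutoff R x")
    case True
    then show ?thesis
      using young[OF less_imp_le[OF w_pos] True cutoff_le_one R, of x "u x"] cutoff_pos_iff[OF R, of x]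
      by (simp add: W_def power_mult[symmetric] mult.commute[of 2] mult_ac)
  next
    case False
    then have "cutoff R x = 0" using cutoff_nonneg[of R x] by simp
    moreover have "0 \<le> K * R powr (- p * (2 * \<alpha> + 1)) * W x"
      using K by (simp add: W_def)
    ultimately show ?thesis using m2 by (simp add: power_0_left)
  qed
  moreover have iE: "integrable lborel (\<lambda>x. exp ((2 * \<alpha> + 1) * u x) * (cutoff R x ^ m)\<^sup>2)"
    using R m2 by (intro integrable_exp_cutoff) auto
  moreover have iW: "integrable lborel W"
    using set_integrable_continuous_ball[of "\<lambda>x. w x powr (2 * \<alpha> + 1)" "2 * R"] \<alpha> w_pos
    by (simp add: W_def[abs_def] set_integrable_def continuous_on_powr' continuous_w less_imp_le)
  ultimately have "cutoff_weight_integral \<alpha> m R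
      \<le> (\<integral>x. \<theta> * (exp ((2 * \<alpha> + 1) * u x) * (cutoff R x ^ m)\<^sup>2) + K * R powr (- p * (2 * \<alpha> + 1)) * W x \<partial>lborel)"
    unfolding cutoff_weight_integral_def using integrable_cutoff_integrands(4)[OF R m]
    by (intro integral_mono) auto
  moreover have "(LINT x : ball 0 (2 * R) | lborel. w x powr (2 * \<alpha> + 1)) = integral\<^sup>L lborel W"
    by (simp add: set_lebesgue_integral_def W_def[abs_def])
  ultimately show ?thesis
    using iE iW by (simp add: exp_integral_def)
qed

lemma exp_integral_cutoff_bound:
  assumes \<alpha>: "1 < (p - 1) * \<alpha>" "(p - 1) * \<alpha> < 2" and m: "p * (2 * \<alpha> + 1) \<le> 2 * real m"
  obtains M where "0 < M" "\<And>R. 0 < R \<Longrightarrow> exp_integral \<alpha> (\<lambda>x. cutoff R x ^ m)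
    \<le> M * R powr (- p * (2 * \<alpha> + 1)) * (LINT x : ball 0 (2 * R) | lborel. w x powr (2 * \<alpha> + 1))"
proof -
  have \<alpha>0: "0 < \<alpha>" using \<alpha> p_gt_2 zero_less_mult_pos[of "p - 1" \<alpha>] by linarith
  have "p < p * (2 * \<alpha> + 1)" using \<alpha>0 p_gt_2 by simp
  then have m': "p < 2 * real m" using m by linarith
  obtain C where C: "0 < C" and E_le:
      "\<And>R. 0 < R \<Longrightarrow> exp_integral \<alpha> (\<lambda>x. cutoff R x ^ m) \<le> C * cutoff_weight_integral \<alpha> m R"
    using exp_integral_cutoff_le_weight_integral[OF \<alpha> m'] by blast
  have \<theta>: "0 < 1 / (2 * C)" using C by simp
  obtain K where K: "0 < K" and young: "\<And>\<omega> v y R. 0 \<le> \<omega> \<Longrightarrow> 0 < y \<Longrightarrow> y \<le> 1 \<Longrightarrow> 0 < R \<Longrightarrow>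
      \<omega> * exp (2 * \<alpha> * v) * (R powr (- p) * y powr (2 * real m - p))
        \<le> 1 / (2 * C) * (exp ((2 * \<alpha> + 1) * v) * y ^ (2 * m))
          + K * (R powr (- p * (2 * \<alpha> + 1)) * \<omega> powr (2 * \<alpha> + 1))"
    using Youngs_inequality_exp_cutoff[OF \<alpha>0 \<theta> m] by blast
  show thesis
  proof (rule that)
    show "0 < 2 * C * K" using C K by simp
    fix R :: real assume R: "0 < R"
    define L where "L = (LINT x : ball 0 (2 * R) | lborel. w x powr (2 * \<alpha> + 1))"
    have "exp_integral \<alpha> (\<lambda>x. cutoff R x ^ m) \<le> C * cutoff_weight_integral \<alpha> m R"
      using E_le[OF R] .
    also have "\<dots> \<le> C * (1 / (2 * C) * exp_integral \<alpha> (\<lambda>x. cutoff R x ^ m) + K * R powr (- p * (2 * \<alpha> + 1)) * L)"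
      unfolding L_def using C K by (intro mult_left_mono cutoff_weight_integral_le[OF R \<alpha>0 m'] young) auto
    finally show "exp_integral \<alpha> (\<lambda>x. cutoff R x ^ m) \<le> 2 * C * K * R powr (- p * (2 * \<alpha> + 1)) * L"
      using C by (simp add: field_simps)
  qed
qed

lemma exp_integral_cutoff_mono:
  assumes "0 < R" "R \<le> R'" "1 \<le> m"
  shows "exp_integral \<alpha> (\<lambda>x. cutoff R x ^ m) \<le> exp_integral \<alpha> (\<lambda>x. cutoff R' x ^ m)"
  unfolding exp_integral_def using assms
  by (intro integral_mono integrable_exp_cutoff mult_left_mono power_mono cutoff_mono)
     (auto simp: cutoff_nonneg)

lemma exp_integral_cutoff_pos:
  assumes "0 < R" "1 \<le> m"
  shows "0 < exp_integral \<alpha> (\<lambda>x. cutoff R x ^ m)"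
  unfolding exp_integral_def using assms
  by (intro integral_pos_if_continuous[where a=0] continuous_intros continuity continuous_on_cutoff
      integrable_exp_cutoff) (auto simp: cutoff_def)

lemma exp_integral_unit_cutoff_le:
  assumes \<alpha>: "1 < (p - 1) * \<alpha>" "(p - 1) * \<alpha> < 2" "2 * \<alpha> + 1 \<le> q"
    and m: "p * (2 * \<alpha> + 1) \<le> 2 * real m" "1 \<le> m"
    and C: "0 < C" "\<And>x. C < w x"
  obtains K where "0 < K" "\<And>R. 1 \<le> R \<Longrightarrow> exp_integral \<alpha> (\<lambda>x. cutoff 1 x ^ m)
    \<le> K * R powr (- p * (2 * \<alpha> + 1)) * (LINT x : ball 0 (2 * R) | lborel. w x powr q)"
proof -
  have \<alpha>0: "0 < \<alpha>"
    using \<alpha>(1) p_gt_2 zero_less_mult_pos[of "p - 1" \<alpha>] by linarith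
  obtain M where M: "0 < M" "\<And>R. 0 < R \<Longrightarrow> exp_integral \<alpha> (\<lambda>x. cutoff R x ^ m)
      \<le> M * R powr (- p * (2 * \<alpha> + 1)) * (LINT x : ball 0 (2 * R) | lborel. w x powr (2 * \<alpha> + 1))"
    using exp_integral_cutoff_bound[OF \<alpha>(1,2) m(1)] by blast
  show thesis
  proof (rule that)
    show "0 < M * C powr (2 * \<alpha> + 1 - q)" using M(1) C(1) by simp
    fix R :: real assume R: "1 \<le> R"
    have "exp_integral \<alpha> (\<lambda>x. cutoff 1 x ^ m) \<le> exp_integral \<alpha> (\<lambda>x. cutoff R x ^ m)"
      using R m(2) by (intro exp_integral_cutoff_mono) auto
    also have "\<dots> \<le> M * R powr (- p * (2 * \<alpha> + 1)) * (LINT x : ball 0 (2 * R) | lborel. w x powr (2 * \<alpha> + 1))"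
      using R by (intro M(2)) auto
    also have "\<dots> \<le> M * R powr (- p * (2 * \<alpha> + 1))
        * (C powr (2 * \<alpha> + 1 - q) * (LINT x : ball 0 (2 * R) | lborel. w x powr q))"
      using M(1) continuous_w C \<alpha>0 \<alpha>(3)
      by (intro mult_left_mono set_integral_powr_le_of_lower_bound) auto
    finally show "exp_integral \<alpha> (\<lambda>x. cutoff 1 x ^ m)
        \<le> M * C powr (2 * \<alpha> + 1 - q) * R powr (- p * (2 * \<alpha> + 1)) * (LINT x : ball 0 (2 * R) | lborel. w x powr q)"
      by (simp add: mult_ac)
  qed
qed

lemma weight_integral_not_bigo:
  assumes C: "0 < C" "\<And>x. C < w x" and \<mu>: "\<mu> < p * (p + 3) / (p - 1)"
  shows "(\<lambda>R. LINT x : ball 0 (2 * R) | lborel. w x powr ((p + 3) / (p - 1))) \<notin> O[at_top](\<lambda>R. R powr \<mu>)"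
proof
  assume "(\<lambda>R. LINT x : ball 0 (2 * R) | lborel. w x powr ((p + 3) / (p - 1))) \<in> O[at_top](\<lambda>R. R powr \<mu>)"
  then obtain c where growth: "eventually (\<lambda>R. norm (LINT x : ball 0 (2 * R) | lborel. w x powr ((p + 3) / (p - 1)))
      \<le> c * norm (R powr \<mu>)) at_top"
    using landau_o.bigE by blast
  obtain \<alpha> where \<alpha>: "1 < (p - 1) * \<alpha>" "(p - 1) * \<alpha> < 2" "\<mu> < p * (2 * \<alpha> + 1)"
      "2 * \<alpha> + 1 \<le> (p + 3) / (p - 1)"
    using exponent_below_critical[of p \<mu>] p_gt_2 \<mu> by auto
  define m where "m = nat \<lceil>p * (2 * \<alpha> + 1)\<rceil>"
  have "0 < p * (2 * \<alpha> + 1)"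
    using \<alpha>(1) p_gt_2 zero_less_mult_pos[of "p - 1" \<alpha>] by simp
  then have m: "p * (2 * \<alpha> + 1) \<le> 2 * real m" "1 \<le> m"
    unfolding m_def by linarith+
  obtain K where K: "0 < K" "\<And>R. 1 \<le> R \<Longrightarrow> exp_integral \<alpha> (\<lambda>x. cutoff 1 x ^ m)
      \<le> K * R powr (- p * (2 * \<alpha> + 1)) * (LINT x : ball 0 (2 * R) | lborel. w x powr ((p + 3) / (p - 1)))"
    using exp_integral_unit_cutoff_le[OF \<alpha>(1,2,4) m C] by blast
  have "eventually (\<lambda>R. exp_integral \<alpha> (\<lambda>x. cutoff 1 x ^ m) \<le> K * c * R powr (\<mu> - p * (2 * \<alpha> + 1))) at_top"
    using growth eventually_ge_at_top[of 1]
  proof eventually_elim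
    case (elim R)
    have "(LINT x : ball 0 (2 * R) | lborel. w x powr ((p + 3) / (p - 1))) \<le> c * R powr \<mu>"
      using elim(1) by (auto dest: abs_le_D1)
    then have "exp_integral \<alpha> (\<lambda>x. cutoff 1 x ^ m) \<le> K * R powr (- p * (2 * \<alpha> + 1)) * (c * R powr \<mu>)"
      using K(2)[OF elim(2)] K(1) by (meson mult_left_mono order.trans powr_ge_zero mult_nonneg_nonneg less_imp_le)
    also have "\<dots> = K * c * R powr (\<mu> - p * (2 * \<alpha> + 1))"
      using elim(2) by (simp add: powr_diff powr_minus powr_add field_simps)
    finally show ?case .
  qed
  then have "exp_integral \<alpha> (\<lambda>x. cutoff 1 x ^ m) \<le> 0"
    by (rule eventually_le_powr_imp_nonpos) (use \<alpha>(3) in simp)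
  with exp_integral_cutoff_pos[of 1 m \<alpha>] m(2) show False by simp
qed

end

theorem theorem1:
  fixes w :: "'a::euclidean_space \<Rightarrow> real" and Dw :: "'a \<Rightarrow> 'a"
    and p C \<mu> \<zeta> :: real
  assumes "p > 2"
    and "C1_grad w Dw"
    and "C > 0" and "\<forall>x. w x > C"
    and "(\<lambda>R. LINT x : ball 0 (2 * R) | lborel. w x powr ((p + 3) / (p - 1)))
           \<in> O[at_top](\<lambda>R. R powr \<mu>)"
    and "\<mu> < p * (p + 3) / (p - 1)"
    and "0 < \<zeta>" and "\<zeta> < 1"
  shows "\<not> (\<exists>u Du. C1_holder_loc_grad \<zeta> u Du \<and> weak_solution p w exp u Du \<and> stable p w exp u Du)"
proof
  assume "\<exists>u Du. C1_holder_loc_grad \<zeta> u Du \<and> weak_solution p w exp u Du \<and> stable p w exp u Du"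
  then obtain u Du where u: "C1_holder_loc_grad \<zeta> u Du" "weak_solution p w exp u Du" "stable p w exp u Du"
    by blast
  have w: "continuous_on UNIV w" "\<And>x. C < w x"
    using assms(2,4) by (auto simp: C1_grad_def intro: is_gradient_imp_continuous_on)
  interpret exp_stable_solution p w u Du
    using assms(1,3) w u by unfold_locales (auto simp: C1_holder_loc_grad_def C1_grad_def intro: less_trans)
  show False
    using weight_integral_not_bigo[OF assms(3) w(2) assms(6)] assms(5) by contradiction
qed

end
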